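(* Assume $\mathcal M_1=\mathcal M_2=1$ and take $A_1=2\chi_{13}^2+\tfrac12(\chi_{12}-\chi_{13}-\chi_{23})^2$, $A_2=2\chi_{23}^2+\tfrac12(\chi_{12}-\chi_{13}-\chi_{23})^2$. Let $n\ge1$ and let $(\phi_1^k,\phi_2^k)\in\vec{\mathcal C}^{\mathcal G}_{\rm per}$, $k=n-1,n,n+1$, with $\overline{\phi_i^{n-1}}=\overline{\phi_i^{n}}=\overline{\phi_i^{n+1}}$ ($i=1,2$), where $(\phi_1^{n+1},\phi_2^{n+1})$ solves the BDF2 scheme at step $n+1$. Define, for $m\ge0$, $F_h^{m+1}=G_h(\phi_1^{m+1},\phi_2^{m+1})+\frac{3}{4\Delta t}\big(\|\phi_1^{m+1}-\phi_1^m\|_{-1,h}^2+\|\phi_2^{m+1}-\phi_2^m\|_{-1,h}^2\big)+\chi_{13}\|\phi_1^{m+1}-\phi_1^m\|_2^2+\chi_{23}\|\phi_2^{m+1}-\phi_2^m\|_2^2.$ Then $F_h^{n+1}\le F_h^{n}$.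
   Context: Discrete setting. Fix $L>0$, $N\in\mathbb N$, $h=L/N$, $\Omega=(0,L)^2$. $\mathcal C_{\rm per}$ is the space of real grid functions $\nu=(\nu_{i,j})_{i,j\in\mathbb Z}$ with $\nu_{i+aN,j+bN}=\nu_{i,j}$ for all integers $i,j,a,b$ ($\nu_{i,j}$ is the value at the cell centre $((i-\tfrac12)h,(j-\tfrac12)h)$); periodic face-centred functions are indexed by $(i+\frac12,j)$ (east-west faces) or $(i,j+\frac12)$ (north-south faces). Define $(A_x\nu)_{i+\frac12,j}=\tfrac12(\nu_{i+1,j}+\nu_{i,j})$, $(D_x\nu)_{i+\frac12,j}=\tfrac1h(\nu_{i+1,j}-\nu_{i,j})$, and for east-west face functions $f$, $(a_xf)_{i,j}=\tfrac12(f_{i+\frac12,j}+f_{i-\frac12,j})$, $(d_xf)_{i,j}=\tfrac1h(f_{i+\frac12,j}-f_{i-\frac12,j})$; $A_y,D_y,a_y,d_y$ are defined analogously in the second index. $\nabla_h\nu=(D_x\nu,D_y\nu)$, $\nabla_h\cdot(f^x,f^y)=d_xf^x+d_yf^y$, $\Delta_h\nu=d_x(D_x\nu)+d_y(D_y\nu)$ (the 5-point Laplacian). For $\nu,\xi\in\mathcal C_{\rm per}$: $\langle\nu,\xi\rangle=h^2\sum_{i,j=1}^N\nu_{i,j}\xi_{i,j}$, $\|\nu\|_2=\langle\nu,\nu\rangle^{1/2}$, $\|\nu\|_\infty=\max_{1\le i,j\le N}|\nu_{i,j}|$, $\|\nabla_h\nu\|_2^2=\langle a_x((D_x\nu)^2)+a_y((D_y\nu)^2),1\rangle$,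 $\overline{\nu}=|\Omega|^{-1}\langle\nu,1\rangle$. For $\overline\nu=0$, $(-\Delta_h)^{-1}\nu$ denotes the unique mean-zero $\psi\in\mathcal C_{\rm per}$ with $-\Delta_h\psi=\nu$; for mean-zero $\nu,\xi$, $\langle\nu,\xi\rangle_{-1,h}=\langle\nu,(-\Delta_h)^{-1}\xi\rangle$ and $\|\nu\|_{-1,h}=\langle\nu,\nu\rangle_{-1,h}^{1/2}$. Functions of grid functions (products, quotients, $\ln$) act pointwise. Model. $M_0,N_0>0$, $\alpha=\pi((M_0/\pi)^{1/2}+N_0/2)^2$, $\beta=2(M_0/\pi)^{1/2}+N_0$; $\varepsilon_1,\varepsilon_2,\varepsilon_3>0$; $\chi_{12},\chi_{13},\chi_{23}>0$ with $4\chi_{13}\chi_{23}-(\chi_{12}-\chi_{13}-\chi_{23})^2>0$; mobilities $\mathcal M_1,\mathcal M_2>0$. For $a,b>0$, $a+b<1$: $S(a,b)=\frac{a}{M_0}\ln\frac{\alpha a}{M_0}+\frac{b}{N_0}\ln\frac{\beta b}{N_0}+(1-a-b)\ln(1-a-b)$, $H(a,b)=\chi_{12}ab+\chi_{13}a(1-a-b)+\chi_{23}b(1-a-b)$; thus $\partial_aS=\frac1{M_0}\ln\frac{\alpha a}{M_0}+\frac1{M_0}-\ln(1-a-b)-1$, $\partial_bS=\frac1{N_0}\ln\frac{\beta b}{N_0}+\frac1{N_0}-\ln(1-a-b)-1$, $\partial_aH=\chi_{13}-2\chi_{13}a+(\chi_{12}-\chi_{13}-\chi_{23})b$, $\partial_bH=\chi_{23}-2\chi_{23}b+(\chi_{12}-\chi_{13}-\chi_{23})a$.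 $\kappa(s)=1/(36s)$. The Gibbs triangle is $\mathcal G=\{(a,b):a>0,b>0,a+b<1\}$, and $\vec{\mathcal C}^{\mathcal G}_{\rm per}$ is the set of pairs $(\phi_1,\phi_2)\in\mathcal C_{\rm per}^2$ with $((\phi_1)_{i,j},(\phi_2)_{i,j})\in\mathcal G$ for all $i,j$. For such a pair set $u_1=\phi_1$, $u_2=\phi_2$, $u_3=1-\phi_1-\phi_2$ and, for $k=1,2,3$, $T_k(\phi_1,\phi_2)=a_x(\kappa'(A_xu_k)(D_xu_k)^2)-2d_x(\kappa(A_xu_k)D_xu_k)+a_y(\kappa'(A_yu_k)(D_yu_k)^2)-2d_y(\kappa(A_yu_k)D_yu_k)$. Discrete energy: $G_h(\phi_1,\phi_2)=\langle S(\phi_1,\phi_2)+H(\phi_1,\phi_2),1\rangle+\sum_{k=1}^3\varepsilon_k^2\langle a_x(\kappa(A_xu_k)(D_xu_k)^2)+a_y(\kappa(A_yu_k)(D_yu_k)^2),1\rangle$. Convex-part derivatives: $\delta_{\phi_1}G_{h,c}(\phi_1,\phi_2)=\partial_aS(\phi_1,\phi_2)+\varepsilon_1^2T_1-\varepsilon_3^2T_3$, $\delta_{\phi_2}G_{h,c}(\phi_1,\phi_2)=\partial_bS(\phi_1,\phi_2)+\varepsilon_2^2T_2-\varepsilon_3^2T_3$. BDF2 scheme. Fix $\Delta t>0$ and constants $A_1,A_2\ge0$. For $n\ge1$, given $(\phi_1^{k},\phi_2^{k})$, $k=n-1,n$, set $\hat\phi_i^n=2\phi_i^n-\phi_i^{n-1}$.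 A pair $(\phi_1^{n+1},\phi_2^{n+1})\in\vec{\mathcal C}^{\mathcal G}_{\rm per}$ solves the scheme at step $n+1$ if for $i=1,2$: $\frac{3\phi_i^{n+1}-4\phi_i^n+\phi_i^{n-1}}{2\Delta t}=\mathcal M_i\Delta_h\mu_i^{n+1}$, where $\mu_1^{n+1}=\delta_{\phi_1}G_{h,c}(\phi_1^{n+1},\phi_2^{n+1})+\partial_aH(\hat\phi_1^n,\hat\phi_2^n)-A_1\Delta t\,\Delta_h(\phi_1^{n+1}-\phi_1^n)$ and $\mu_2^{n+1}=\delta_{\phi_2}G_{h,c}(\phi_1^{n+1},\phi_2^{n+1})+\partial_bH(\hat\phi_1^n,\hat\phi_2^n)-A_2\Delta t\,\Delta_h(\phi_2^{n+1}-\phi_2^n)$. *)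

theory Defs
  imports Complex_Main
begin

text \<open>A cell-centred function nu is a map int => int => real, nu i j being
  the value at cell (i,j). An east-west face function f is also int => int => real, where
  f i j is the value at face (i+1/2, j); a north-south face function g has g i j the value
  at face (i, j+1/2).\<close>

type_synonym grid = "int \<Rightarrow> int \<Rightarrow> real"

definition hgrid :: "real \<Rightarrow> nat \<Rightarrow> real" where
  "hgrid L N = L / real N"

definition per :: "nat \<Rightarrow> grid \<Rightarrow> bool" where
  "per N \<nu> \<longleftrightarrow> (\<forall>i j a b. \<nu> (i + a * int N) (j + b * int N) = \<nu> i j)"

definition Ax :: "grid \<Rightarrow> grid" where "Ax \<nu> i j = (\<nu> (i+1) j + \<nu> i j) / 2"
definition Ay :: "grid \<Rightarrow> grid" where "Ay \<nu> i j = (\<nu> i (j+1) + \<nu> i j) / 2"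
definition Dx :: "real \<Rightarrow> grid \<Rightarrow> grid" where "Dx h \<nu> i j = (\<nu> (i+1) j - \<nu> i j) / h"
definition Dy :: "real \<Rightarrow> grid \<Rightarrow> grid" where "Dy h \<nu> i j = (\<nu> i (j+1) - \<nu> i j) / h"
definition ax :: "grid \<Rightarrow> grid" where "ax f i j = (f i j + f (i-1) j) / 2"
definition ay :: "grid \<Rightarrow> grid" where "ay f i j = (f i j + f i (j-1)) / 2"
definition dx :: "real \<Rightarrow> grid \<Rightarrow> grid" where "dx h f i j = (f i j - f (i-1) j) / h"
definition dy :: "real \<Rightarrow> grid \<Rightarrow> grid" where "dy h f i j = (f i j - f i (j-1)) / h"

definition lap :: "real \<Rightarrow> grid \<Rightarrow> grid" where
  "lap h \<nu> i j = dx h (Dx h \<nu>) i j + dy h (Dy h \<nu>) i j"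

definition ginner :: "real \<Rightarrow> nat \<Rightarrow> grid \<Rightarrow> grid \<Rightarrow> real" where
  "ginner L N \<nu> \<xi> = (hgrid L N)^2 * (\<Sum>i\<in>{1..int N}. \<Sum>j\<in>{1..int N}. \<nu> i j * \<xi> i j)"

definition gnorm2 :: "real \<Rightarrow> nat \<Rightarrow> grid \<Rightarrow> real" where
  "gnorm2 L N \<nu> = sqrt (ginner L N \<nu> \<nu>)"

definition gmean :: "real \<Rightarrow> nat \<Rightarrow> grid \<Rightarrow> real" where
  "gmean L N \<nu> = ginner L N \<nu> (\<lambda>_ _. 1) / L^2"

definition invlap :: "real \<Rightarrow> nat \<Rightarrow> grid \<Rightarrow> grid" where
  "invlap L N \<nu> = (THE \<psi>. per N \<psi> \<and> gmean L N \<psi> = 0 \<and>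
       (\<forall>i j. - lap (hgrid L N) \<psi> i j = \<nu> i j))"

definition inner_m1 :: "real \<Rightarrow> nat \<Rightarrow> grid \<Rightarrow> grid \<Rightarrow> real" where
  "inner_m1 L N \<nu> \<xi> = ginner L N \<nu> (invlap L N \<xi>)"

definition norm_m1 :: "real \<Rightarrow> nat \<Rightarrow> grid \<Rightarrow> real" where
  "norm_m1 L N \<nu> = sqrt (inner_m1 L N \<nu> \<nu>)"

definition alphaM :: "real \<Rightarrow> real \<Rightarrow> real" where
  "alphaM M0 N0 = pi * (sqrt (M0 / pi) + N0 / 2)^2"
definition betaM :: "real \<Rightarrow> real \<Rightarrow> real" where
  "betaM M0 N0 = 2 * sqrt (M0 / pi) + N0"

definition Sfun :: "real \<Rightarrow> real \<Rightarrow> real \<Rightarrow> real \<Rightarrow> real" where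
  "Sfun M0 N0 a b = a / M0 * ln (alphaM M0 N0 * a / M0) + b / N0 * ln (betaM M0 N0 * b / N0)
     + (1 - a - b) * ln (1 - a - b)"

definition dSa :: "real \<Rightarrow> real \<Rightarrow> real \<Rightarrow> real \<Rightarrow> real" where
  "dSa M0 N0 a b = 1 / M0 * ln (alphaM M0 N0 * a / M0) + 1 / M0 - ln (1 - a - b) - 1"
definition dSb :: "real \<Rightarrow> real \<Rightarrow> real \<Rightarrow> real \<Rightarrow> real" where
  "dSb M0 N0 a b = 1 / N0 * ln (betaM M0 N0 * b / N0) + 1 / N0 - ln (1 - a - b) - 1"

definition Hfun :: "real \<Rightarrow> real \<Rightarrow> real \<Rightarrow> real \<Rightarrow> real \<Rightarrow> real" where
  "Hfun c12 c13 c23 a b = c12 * a * b + c13 * a * (1 - a - b) + c23 * b * (1 - a - b)"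
definition dHa :: "real \<Rightarrow> real \<Rightarrow> real \<Rightarrow> real \<Rightarrow> real \<Rightarrow> real" where
  "dHa c12 c13 c23 a b = c13 - 2 * c13 * a + (c12 - c13 - c23) * b"
definition dHb :: "real \<Rightarrow> real \<Rightarrow> real \<Rightarrow> real \<Rightarrow> real \<Rightarrow> real" where
  "dHb c12 c13 c23 a b = c23 - 2 * c23 * b + (c12 - c13 - c23) * a"

definition kappa :: "real \<Rightarrow> real" where "kappa s = 1 / (36 * s)"
definition kappa' :: "real \<Rightarrow> real" where "kappa' s = - 1 / (36 * s^2)"

definition gibbs :: "nat \<Rightarrow> grid \<Rightarrow> grid \<Rightarrow> bool" where
  "gibbs N p1 p2 \<longleftrightarrow> per N p1 \<and> per N p2 \<and>
     (\<forall>i j. 0 < p1 i j \<and> 0 < p2 i j \<and> p1 i j + p2 i j < 1)"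

definition Tk :: "real \<Rightarrow> grid \<Rightarrow> grid" where
  "Tk h u i j =
     ax (\<lambda>a b. kappa' (Ax u a b) * (Dx h u a b)^2) i j
     - 2 * dx h (\<lambda>a b. kappa (Ax u a b) * Dx h u a b) i j
     + ay (\<lambda>a b. kappa' (Ay u a b) * (Dy h u a b)^2) i j
     - 2 * dy h (\<lambda>a b. kappa (Ay u a b) * Dy h u a b) i j"

definition gradE :: "real \<Rightarrow> nat \<Rightarrow> grid \<Rightarrow> real" where
  "gradE L N u = ginner L N (\<lambda>i j.
      ax (\<lambda>a b. kappa (Ax u a b) * (Dx (hgrid L N) u a b)^2) i j
    + ay (\<lambda>a b. kappa (Ay u a b) * (Dy (hgrid L N) u a b)^2) i j) (\<lambda>_ _. 1)"

definition Gh :: "real \<Rightarrow> nat \<Rightarrow> real \<Rightarrow> real \<Rightarrow> real \<Rightarrow> real \<Rightarrow> real \<Rightarrow> real \<Rightarrow> real \<Rightarrow> real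
     \<Rightarrow> grid \<Rightarrow> grid \<Rightarrow> real" where
  "Gh L N M0 N0 c12 c13 c23 e1 e2 e3 p1 p2 =
     ginner L N (\<lambda>i j. Sfun M0 N0 (p1 i j) (p2 i j) + Hfun c12 c13 c23 (p1 i j) (p2 i j)) (\<lambda>_ _. 1)
     + e1^2 * gradE L N p1 + e2^2 * gradE L N p2
     + e3^2 * gradE L N (\<lambda>i j. 1 - p1 i j - p2 i j)"

definition dGc1 :: "real \<Rightarrow> nat \<Rightarrow> real \<Rightarrow> real \<Rightarrow> real \<Rightarrow> real \<Rightarrow> grid \<Rightarrow> grid \<Rightarrow> grid" where
  "dGc1 L N M0 N0 e1 e3 p1 p2 i j =
     dSa M0 N0 (p1 i j) (p2 i j) + e1^2 * Tk (hgrid L N) p1 i j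
     - e3^2 * Tk (hgrid L N) (\<lambda>a b. 1 - p1 a b - p2 a b) i j"

definition dGc2 :: "real \<Rightarrow> nat \<Rightarrow> real \<Rightarrow> real \<Rightarrow> real \<Rightarrow> real \<Rightarrow> grid \<Rightarrow> grid \<Rightarrow> grid" where
  "dGc2 L N M0 N0 e2 e3 p1 p2 i j =
     dSb M0 N0 (p1 i j) (p2 i j) + e2^2 * Tk (hgrid L N) p2 i j
     - e3^2 * Tk (hgrid L N) (\<lambda>a b. 1 - p1 a b - p2 a b) i j"

text \<open>BDF2 scheme at step n+1: (q1,q2) = phi^{n-1}, (p1,p2) = phi^n, (r1,r2) = phi^{n+1}.\<close>
definition bdf2_step :: "real \<Rightarrow> nat \<Rightarrow> real \<Rightarrow> real \<Rightarrow> real \<Rightarrow> real \<Rightarrow> real \<Rightarrow> real \<Rightarrow> real \<Rightarrow> real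
   \<Rightarrow> real \<Rightarrow> real \<Rightarrow> real \<Rightarrow> real \<Rightarrow> real
   \<Rightarrow> grid \<Rightarrow> grid \<Rightarrow> grid \<Rightarrow> grid \<Rightarrow> grid \<Rightarrow> grid \<Rightarrow> bool" where
  "bdf2_step L N M0 N0 c12 c13 c23 e1 e2 e3 Mob1 Mob2 dt A1 A2 q1 q2 p1 p2 r1 r2 \<longleftrightarrow>
     gibbs N r1 r2 \<and>
     (let h = hgrid L N;
          hat1 = (\<lambda>i j. 2 * p1 i j - q1 i j);
          hat2 = (\<lambda>i j. 2 * p2 i j - q2 i j);
          mu1 = (\<lambda>i j. dGc1 L N M0 N0 e1 e3 r1 r2 i j + dHa c12 c13 c23 (hat1 i j) (hat2 i j)
                   - A1 * dt * lap h (\<lambda>a b. r1 a b - p1 a b) i j);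
          mu2 = (\<lambda>i j. dGc2 L N M0 N0 e2 e3 r1 r2 i j + dHb c12 c13 c23 (hat1 i j) (hat2 i j)
                   - A2 * dt * lap h (\<lambda>a b. r2 a b - p2 a b) i j)
      in (\<forall>i j. (3 * r1 i j - 4 * p1 i j + q1 i j) / (2 * dt) = Mob1 * lap h mu1 i j) \<and>
         (\<forall>i j. (3 * r2 i j - 4 * p2 i j + q2 i j) / (2 * dt) = Mob2 * lap h mu2 i j))"

text \<open>Modified energy F^{m+1} with (a1,a2) = phi^{m+1}, (b1,b2) = phi^m.\<close>
definition Fh :: "real \<Rightarrow> nat \<Rightarrow> real \<Rightarrow> real \<Rightarrow> real \<Rightarrow> real \<Rightarrow> real \<Rightarrow> real \<Rightarrow> real \<Rightarrow> real
     \<Rightarrow> real \<Rightarrow> grid \<Rightarrow> grid \<Rightarrow> grid \<Rightarrow> grid \<Rightarrow> real" where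
  "Fh L N M0 N0 c12 c13 c23 e1 e2 e3 dt a1 a2 b1 b2 =
     Gh L N M0 N0 c12 c13 c23 e1 e2 e3 a1 a2
     + 3 / (4 * dt) * ((norm_m1 L N (\<lambda>i j. a1 i j - b1 i j))^2 + (norm_m1 L N (\<lambda>i j. a2 i j - b2 i j))^2)
     + c13 * (gnorm2 L N (\<lambda>i j. a1 i j - b1 i j))^2 + c23 * (gnorm2 L N (\<lambda>i j. a2 i j - b2 i j))^2"

end

(* Test the scheme with the increments a = phi^{n+1} - phi^n in the discrete H^{-1} inner
   product.  Convexity of S and of the gradient energy bounds G_h(phi^{n+1}) - G_h(phi^n) by the
   pairing of the convex-part chemical potentials with a; the concave part H, evaluated at the
   extrapolation 2 phi^n - phi^{n-1}, leaves a remainder bounded by multiples of ||a||^2 and of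
   ||phi^n - phi^{n-1}||^2, and the artificial diffusion A dt ||grad a||^2 absorbs the first one
   via ||a||^2 = <grad (-Delta_h)^{-1} a, grad a>.  The BDF2 quotient contributes
   -(3 ||a||_{-1}^2 - <b, a>_{-1}) / (2 dt) with b = phi^n - phi^{n-1}, and after Cauchy-Schwarz
   the H^{-1} terms telescope exactly into the modified energy F_h.  Discretely, the only
   nontrivial ingredient is that (-Delta_h)^{-1} is well defined on mean-zero periodic grids. *)

theory Submission
  imports Defs "HOL-Library.Function_Algebras"
begin

section \<open>Sums over a period cell\<close>

definition cell_sum :: "nat \<Rightarrow> grid \<Rightarrow> real" where
  "cell_sum N f = (\<Sum>i\<in>{1..int N}. \<Sum>j\<in>{1..int N}. f i j)"

lemma ginner_cell_sum: "ginner L N u v = (hgrid L N)^2 * cell_sum N (\<lambda>i j. u i j * v i j)"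
  by (simp add: ginner_def cell_sum_def)

lemma cell_sum_add: "cell_sum N (\<lambda>i j. f i j + g i j) = cell_sum N f + cell_sum N g"
  by (simp add: cell_sum_def sum.distrib)

lemma cell_sum_diff: "cell_sum N (\<lambda>i j. f i j - g i j) = cell_sum N f - cell_sum N g"
  by (simp add: cell_sum_def sum_subtractf)

lemma cell_sum_cmult: "cell_sum N (\<lambda>i j. c * f i j) = c * cell_sum N f"
  by (simp add: cell_sum_def sum_distrib_left)

lemma cell_sum_neg: "cell_sum N (\<lambda>i j. - f i j) = - cell_sum N f"
  by (simp add: cell_sum_def sum_negf)

lemma cell_sum_divide: "cell_sum N (\<lambda>i j. f i j / c) = cell_sum N f / c"
  by (simp add: cell_sum_def sum_divide_distrib)

lemma cell_sum_const: "cell_sum N (\<lambda>i j. c) = real N * real N * c"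
  by (simp add: cell_sum_def)

lemma cell_sum_mono: "(\<And>i j. f i j \<le> g i j) \<Longrightarrow> cell_sum N f \<le> cell_sum N g"
  unfolding cell_sum_def by (intro sum_mono) auto

lemma cell_sum_nonneg: "(\<And>i j. 0 \<le> f i j) \<Longrightarrow> 0 \<le> cell_sum N f"
  unfolding cell_sum_def by (intro sum_nonneg) auto

lemma cell_sum_nonneg_eq_0:
  assumes "\<And>i j. 0 \<le> f i j" and "cell_sum N f = 0" and "i \<in> {1..int N}" and "j \<in> {1..int N}"
  shows "f i j = 0"
proof -
  have "(\<Sum>j\<in>{1..int N}. f i j) = 0"
    using assms(2,3) unfolding cell_sum_def
    by (subst (asm) sum_nonneg_eq_0_iff) (auto intro: sum_nonneg assms(1))
  then show ?thesis using assms(1,4) by (subst (asm) sum_nonneg_eq_0_iff) auto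
qed

lemma cell_sum_transpose: "cell_sum N (\<lambda>i j. f j i) = cell_sum N f"
  unfolding cell_sum_def by (rule sum.swap)

lemma per_shift: "per N u \<Longrightarrow> per N (\<lambda>i j. u (i + d) (j + e))"
  unfolding per_def by (metis add.commute add.left_commute)

lemma per_transpose: "per N u \<Longrightarrow> per N (\<lambda>i j. u j i)"
  unfolding per_def by blast

lemma per_cell_rep:
  assumes "per N f" and "N \<ge> 1"
  obtains i' j' where "i' \<in> {1..int N}" "j' \<in> {1..int N}" "f i j = f i' j'"
proof
  have N: "0 < int N" using assms(2) by simp
  show "(i - 1) mod int N + 1 \<in> {1..int N}" "(j - 1) mod int N + 1 \<in> {1..int N}"
    using pos_mod_bound[OF N] pos_mod_sign[OF N] by (simp_all add: add1_zle_eq)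
  have "f i j = f ((i - 1) mod int N + 1 + (i - 1) div int N * int N)
                  ((j - 1) mod int N + 1 + (j - 1) div int N * int N)"
    by (simp add: algebra_simps)
  then show "f i j = f ((i - 1) mod int N + 1) ((j - 1) mod int N + 1)"
    using assms(1) unfolding per_def by presburger
qed

lemma sum_shift_periodic:
  fixes g :: "int \<Rightarrow> real"
  assumes "g 0 = g (int N)"
  shows "(\<Sum>i\<in>{1..int N}. g (i - 1)) = (\<Sum>i\<in>{1..int N}. g i)"
proof -
  have "(\<Sum>i\<in>{1..int N}. g (i - 1)) = (\<Sum>i\<in>{0..int N - 1}. g i)"
    by (rule sum.reindex_bij_witness[of _ "\<lambda>i. i + 1" "\<lambda>i. i - 1"]) auto
  also have "\<dots> = (\<Sum>i\<in>{1..int N}. g i)"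
  proof (cases "N = 0")
    case False
    then have "{0..int N - 1} = insert 0 {1..int N - 1}" "{1..int N} = insert (int N) {1..int N - 1}"
      by auto
    then show ?thesis using assms by simp
  qed simp
  finally show ?thesis .
qed

lemma cell_sum_shift:
  assumes "per N g"
  shows "cell_sum N (\<lambda>i j. g (i - 1) j) = cell_sum N g"
proof -
  have "g 0 j = g (int N) j" for j
    using assms unfolding per_def by (metis add_0 mult_1 mult_zero_left add_0_right)
  then have "(\<Sum>i\<in>{1..int N}. g (i - 1) j) = (\<Sum>i\<in>{1..int N}. g i j)" for j
    by (rule sum_shift_periodic)
  then show ?thesis
    unfolding cell_sum_def by (subst (1 2) sum.swap) simp
qed

section \<open>Summation by parts\<close>

lemma cell_sum_shift_adjoint:
  assumes "per N f" and "per N v"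
  shows "cell_sum N (\<lambda>i j. f (i - 1) j * v i j) = cell_sum N (\<lambda>i j. f i j * v (i + 1) j)"
proof -
  have "per N (\<lambda>i j. f i j * v (i + 1) j)"
    using assms per_shift[OF assms(2), of 1 0] unfolding per_def by simp
  from cell_sum_shift[OF this] show ?thesis by simp
qed

lemma cell_sum_ax_mult:
  assumes "per N f" and "per N v"
  shows "cell_sum N (\<lambda>i j. ax f i j * v i j) = cell_sum N (\<lambda>i j. f i j * Ax v i j)"
proof -
  have "cell_sum N (\<lambda>i j. ax f i j * v i j)
      = (cell_sum N (\<lambda>i j. f i j * v i j) + cell_sum N (\<lambda>i j. f (i - 1) j * v i j)) / 2"
    by (simp add: ax_def cell_sum_add[symmetric] cell_sum_divide[symmetric] add_divide_distrib
        distrib_right)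
  also have "\<dots> = cell_sum N (\<lambda>i j. f i j * Ax v i j)"
    by (simp add: cell_sum_shift_adjoint[OF assms] Ax_def cell_sum_add[symmetric]
        cell_sum_divide[symmetric] add_divide_distrib distrib_left add.commute)
  finally show ?thesis .
qed

lemma cell_sum_dx_mult:
  assumes "per N f" and "per N v"
  shows "cell_sum N (\<lambda>i j. dx h f i j * v i j) = - cell_sum N (\<lambda>i j. f i j * Dx h v i j)"
proof -
  have "cell_sum N (\<lambda>i j. dx h f i j * v i j)
      = (cell_sum N (\<lambda>i j. f i j * v i j) - cell_sum N (\<lambda>i j. f (i - 1) j * v i j)) / h"
    by (simp add: dx_def cell_sum_diff[symmetric] cell_sum_divide[symmetric] diff_divide_distrib
        left_diff_distrib)
  also have "\<dots> = - cell_sum N (\<lambda>i j. f i j * Dx h v i j)"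
    by (simp add: cell_sum_shift_adjoint[OF assms] Dx_def cell_sum_diff[symmetric]
        cell_sum_neg[symmetric] cell_sum_divide[symmetric] diff_divide_distrib right_diff_distrib)
  finally show ?thesis .
qed

lemma cell_sum_ay_mult:
  assumes "per N f" and "per N v"
  shows "cell_sum N (\<lambda>i j. ay f i j * v i j) = cell_sum N (\<lambda>i j. f i j * Ay v i j)"
proof -
  have "cell_sum N (\<lambda>i j. ay f i j * v i j) = cell_sum N (\<lambda>i j. ax (\<lambda>a b. f b a) i j * v j i)"
    by (subst cell_sum_transpose[symmetric]) (simp add: ay_def ax_def)
  also have "\<dots> = cell_sum N (\<lambda>i j. f j i * Ax (\<lambda>a b. v b a) i j)"
    using cell_sum_ax_mult[OF per_transpose per_transpose, OF assms] .
  also have "\<dots> = cell_sum N (\<lambda>i j. f i j * Ay v i j)"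
    by (subst (2) cell_sum_transpose[symmetric]) (simp add: Ay_def Ax_def)
  finally show ?thesis .
qed

lemma cell_sum_dy_mult:
  assumes "per N f" and "per N v"
  shows "cell_sum N (\<lambda>i j. dy h f i j * v i j) = - cell_sum N (\<lambda>i j. f i j * Dy h v i j)"
proof -
  have "cell_sum N (\<lambda>i j. dy h f i j * v i j) = cell_sum N (\<lambda>i j. dx h (\<lambda>a b. f b a) i j * v j i)"
    by (subst cell_sum_transpose[symmetric]) (simp add: dy_def dx_def)
  also have "\<dots> = - cell_sum N (\<lambda>i j. f j i * Dx h (\<lambda>a b. v b a) i j)"
    using cell_sum_dx_mult[OF per_transpose per_transpose, OF assms] .
  also have "\<dots> = - cell_sum N (\<lambda>i j. f i j * Dy h v i j)"
    by (subst (2) cell_sum_transpose[symmetric]) (simp add: Dy_def Dx_def)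
  finally show ?thesis .
qed

lemma per_Ax: "per N u \<Longrightarrow> per N (Ax u)"
  using per_shift[of N u 1 0] unfolding per_def Ax_def by simp

lemma per_Ay: "per N u \<Longrightarrow> per N (Ay u)"
  using per_shift[of N u 0 1] unfolding per_def Ay_def by simp

lemma per_Dx: "per N u \<Longrightarrow> per N (Dx h u)"
  using per_shift[of N u 1 0] unfolding per_def Dx_def by simp

lemma per_Dy: "per N u \<Longrightarrow> per N (Dy h u)"
  using per_shift[of N u 0 1] unfolding per_def Dy_def by simp

lemma per_ax: "per N f \<Longrightarrow> per N (ax f)"
  using per_shift[of N f "-1" 0] unfolding per_def ax_def by simp

lemma per_ay: "per N f \<Longrightarrow> per N (ay f)"
  using per_shift[of N f 0 "-1"] unfolding per_def ay_def by simp

lemma per_dx: "per N f \<Longrightarrow> per N (dx h f)"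
  using per_shift[of N f "-1" 0] unfolding per_def dx_def by simp

lemma per_dy: "per N f \<Longrightarrow> per N (dy h f)"
  using per_shift[of N f 0 "-1"] unfolding per_def dy_def by simp

lemma per_lap: "per N u \<Longrightarrow> per N (lap h u)"
  using per_dx[OF per_Dx, of N u h h] per_dy[OF per_Dy, of N u h h]
  unfolding per_def lap_def by simp

lemma lap_diff: "lap h (\<lambda>i j. u i j - v i j) i j = lap h u i j - lap h v i j"
  by (simp add: lap_def dx_def dy_def Dx_def Dy_def divide_inverse algebra_simps)

definition dirichlet :: "real \<Rightarrow> nat \<Rightarrow> grid \<Rightarrow> grid \<Rightarrow> real" where
  "dirichlet h N u v = cell_sum N (\<lambda>i j. Dx h u i j * Dx h v i j + Dy h u i j * Dy h v i j)"

lemma dirichlet_commute: "dirichlet h N u v = dirichlet h N v u"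
  unfolding dirichlet_def by (simp add: mult.commute)

lemma dirichlet_self_nonneg: "0 \<le> dirichlet h N u u"
  unfolding dirichlet_def by (rule cell_sum_nonneg) simp

lemma dirichlet_young: "2 * k * dirichlet h N u v \<le> dirichlet h N u u + k^2 * dirichlet h N v v"
proof -
  have "2 * k * (Dx h u i j * Dx h v i j + Dy h u i j * Dy h v i j)
     \<le> (Dx h u i j * Dx h u i j + Dy h u i j * Dy h u i j)
        + k^2 * (Dx h v i j * Dx h v i j + Dy h v i j * Dy h v i j)" for i j
  proof -
    have "0 \<le> (Dx h u i j - k * Dx h v i j)^2 + (Dy h u i j - k * Dy h v i j)^2" by simp
    then show ?thesis by (simp add: power2_eq_square algebra_simps)
  qed
  then show ?thesis
    unfolding dirichlet_def cell_sum_cmult[symmetric] cell_sum_add[symmetric] mult.assoc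
    by (rule cell_sum_mono)
qed

lemma cell_sum_lap_mult:
  assumes "per N u" and "per N v"
  shows "cell_sum N (\<lambda>i j. lap h u i j * v i j) = - dirichlet h N u v"
  using cell_sum_dx_mult[OF per_Dx[OF assms(1)] assms(2), of h h]
    cell_sum_dy_mult[OF per_Dy[OF assms(1)] assms(2), of h h]
  by (simp add: lap_def distrib_right cell_sum_add dirichlet_def)

lemma cell_sum_lap: "per N u \<Longrightarrow> cell_sum N (lap h u) = 0"
  using cell_sum_lap_mult[of N u "\<lambda>i j. 1" h]
  by (simp add: per_def dirichlet_def Dx_def Dy_def cell_sum_const)

lemma grid_const_if_shift_invariant:
  fixes g :: grid
  assumes x: "\<And>i j. g (i + 1) j = g i j" and y: "\<And>i j. g i (j + 1) = g i j"
  shows "g i j = g 0 0"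
proof -
  have "g i j = g 0 j" for i j
  proof (induct i rule: int_induct[where k = 0])
    case (step2 i) then show ?case using x[of "i - 1" j] by simp
  qed (use x in simp_all)
  moreover have "g 0 j = g 0 0" for j
  proof (induct j rule: int_induct[where k = 0])
    case (step2 j) then show ?case using y[of 0 "j - 1"] by simp
  qed (use y in simp_all)
  ultimately show ?thesis by (rule trans)
qed

lemma per_harmonic_zero:
  assumes per: "per N g" and N: "N \<ge> 1" and h: "h \<noteq> 0"
    and harmonic: "\<And>i j. lap h g i j = 0" and mean: "cell_sum N g = 0"
  shows "g i j = 0"
proof -
  have D: "dirichlet h N g g = 0"
    using cell_sum_lap_mult[OF per per, of h] harmonic by (simp add: cell_sum_def)
  have grad0: "Dx h g i j = 0 \<and> Dy h g i j = 0" for i j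
  proof -
    have "per N (\<lambda>i j. (Dx h g i j)^2 + (Dy h g i j)^2)"
      using per_Dx[OF per] per_Dy[OF per] unfolding per_def by simp
    then obtain i' j' where cell: "i' \<in> {1..int N}" "j' \<in> {1..int N}"
      and eq: "(Dx h g i j)^2 + (Dy h g i j)^2 = (Dx h g i' j')^2 + (Dy h g i' j')^2"
      using per_cell_rep N by blast
    have "(Dx h g i' j')^2 + (Dy h g i' j')^2 = 0"
      using cell_sum_nonneg_eq_0[OF _ D[unfolded dirichlet_def] cell]
      by (simp add: power2_eq_square)
    then show ?thesis using eq by (simp add: add_nonneg_eq_0_iff)
  qed
  have const: "g = (\<lambda>_ _. g 0 0)"
    by (intro ext grid_const_if_shift_invariant) (use grad0 h in \<open>simp_all add: Dx_def Dy_def\<close>)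
  then have "cell_sum N g = real N * real N * g 0 0" by (metis cell_sum_const)
  then have "g 0 0 = 0" using mean N by simp
  then show ?thesis by (subst const) simp
qed

section \<open>The discrete Poisson problem\<close>

lemma (in vector_space) linear_inj_on_span_imp_onto:
  assumes f: "Vector_Spaces.linear scale scale f" and E: "finite E"
    and into: "f ` span E \<subseteq> span E" and inj: "inj_on f (span E)"
  shows "span E \<subseteq> f ` span E"
proof
  interpret f: Vector_Spaces.linear scale scale f by (fact f)
  obtain B where B: "B \<subseteq> span E" "independent B" "span E \<subseteq> span B"
    using basis_exists by metis
  have fin: "finite B" using independent_span_bound[OF E B(2,1)] by (rule conjunct1)
  have spanB: "span B = span E"
    using B(3) span_minimal[OF B(1) subspace_span] by (rule subset_antisym[rotated])
  have injB: "inj_on f (span B)" using inj spanB by simp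
  have indep: "independent (f ` B)"
    using f.independent_injective_image[OF B(2) injB] .
  fix x assume x: "x \<in> span E"
  show "x \<in> f ` span E"
  proof (rule ccontr)
    assume "x \<notin> f ` span E"
    then have nx: "x \<notin> span (f ` B)" by (simp add: f.span_image spanB)
    have "independent (insert x (f ` B))" by (rule independent_insertI[OF nx indep])
    moreover have "insert x (f ` B) \<subseteq> span B"
      using x into spanB span_superset[of B] by auto
    ultimately have "card (insert x (f ` B)) \<le> card B"
      using independent_span_bound[OF fin] by blast
    moreover have "card (insert x (f ` B)) = Suc (card B)"
    proof -
      have "x \<notin> f ` B" using nx span_superset by blast
      moreover have "card (f ` B) = card B"
        using card_image inj_on_subset[OF injB span_superset] by blast
      ultimately show ?thesis using fin by simp
    qed
    ultimately show False by simp
  qed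
qed

definition grid_scale :: "real \<Rightarrow> grid \<Rightarrow> grid" where
  "grid_scale c g = (\<lambda>i j. c * g i j)"

interpretation grid_vs: vector_space grid_scale
  by unfold_locales (simp_all add: grid_scale_def fun_eq_iff algebra_simps)

lemma sum_fun_apply: "(\<Sum>x\<in>A. F x) y = (\<Sum>x\<in>A. F x y)"
  by (induction A rule: infinite_finite_induct) auto

definition cell_indicator :: "nat \<Rightarrow> int \<Rightarrow> int \<Rightarrow> grid" where
  "cell_indicator N a b = (\<lambda>i j. if i mod int N = a \<and> j mod int N = b then 1 else 0)"

lemma per_mod_eq: "per N g \<Longrightarrow> g i j = g (i mod int N) (j mod int N)"
  unfolding per_def by (metis mod_div_mult_eq)

definition cell_indicators :: "nat \<Rightarrow> grid set" where
  "cell_indicators N = (\<lambda>(a, b). cell_indicator N a b) ` ({0..<int N} \<times> {0..<int N})"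

lemma span_cell_indicators:
  assumes "N \<ge> 1"
  shows "grid_vs.span (cell_indicators N) = {g. per N g}"
proof
  show "grid_vs.span (cell_indicators N) \<subseteq> {g. per N g}"
  proof (rule grid_vs.span_minimal)
    show "grid_vs.subspace {g. per N g}"
      by (auto simp: grid_vs.subspace_def grid_scale_def per_def)
  qed (auto simp: cell_indicators_def cell_indicator_def per_def)
next
  have N: "0 < int N" using assms by simp
  show "{g. per N g} \<subseteq> grid_vs.span (cell_indicators N)"
  proof
    fix g assume "g \<in> {g. per N g}"
    then have g: "per N g" by simp
    have "g = (\<Sum>(a, b)\<in>{0..<int N} \<times> {0..<int N}. grid_scale (g a b) (cell_indicator N a b))"
    proof (intro ext)
      fix i j
      have "(\<Sum>(a, b)\<in>{0..<int N} \<times> {0..<int N}. grid_scale (g a b) (cell_indicator N a b)) i j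
          = (\<Sum>a\<in>{0..<int N}. \<Sum>b\<in>{0..<int N}.
               g a b * (if i mod int N = a \<and> j mod int N = b then 1 else 0))"
        by (simp add: sum_fun_apply sum.cartesian_product[symmetric] grid_scale_def
            cell_indicator_def)
      also have "\<dots> = (\<Sum>a\<in>{0..<int N}. \<Sum>b\<in>{0..<int N}.
               if j mod int N = b then if i mod int N = a then g a b else 0 else 0)"
        by (intro sum.cong refl) simp
      also have "\<dots> = g (i mod int N) (j mod int N)"
        using pos_mod_bound[OF N] pos_mod_sign[OF N] by (simp add: sum.delta')
      finally show "g i j = (\<Sum>(a, b)\<in>{0..<int N} \<times> {0..<int N}.
          grid_scale (g a b) (cell_indicator N a b)) i j"
        using per_mod_eq[OF g] by simp
    qed
    also have "\<dots> \<in> grid_vs.span (cell_indicators N)"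
      by (rule grid_vs.span_sum)
         (auto simp: cell_indicators_def intro!: grid_vs.span_scale[OF grid_vs.span_base])
    finally show "g \<in> \<dots>" .
  qed
qed

text \<open>\<open>-\<Delta>\<^sub>h\<close> annihilates constants; adding the cell sum makes it injective on periodic
  grids, and for data with zero cell sum its solutions are exactly the zero-sum solutions of
  \<open>-\<Delta>\<^sub>h \<psi> = \<nu>\<close>.\<close>

definition neg_lap_plus_sum :: "real \<Rightarrow> nat \<Rightarrow> grid \<Rightarrow> grid" where
  "neg_lap_plus_sum h N g = (\<lambda>i j. cell_sum N g - lap h g i j)"

lemma linear_neg_lap_plus_sum: "Vector_Spaces.linear grid_scale grid_scale (neg_lap_plus_sum h N)"
proof -
  have lap_add: "lap h (\<lambda>i j. u i j + v i j) i j = lap h u i j + lap h v i j"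
    and lap_scale: "lap h (\<lambda>i j. c * u i j) i j = c * lap h u i j" for u v c i j
    by (simp_all add: lap_def dx_def dy_def Dx_def Dy_def divide_inverse algebra_simps)
  have "neg_lap_plus_sum h N (u + v) = neg_lap_plus_sum h N u + neg_lap_plus_sum h N v" for u v
  proof -
    have uv: "u + v = (\<lambda>i j. u i j + v i j)" by (simp add: fun_eq_iff)
    show ?thesis unfolding uv by (simp add: fun_eq_iff neg_lap_plus_sum_def cell_sum_add lap_add)
  qed
  moreover have "neg_lap_plus_sum h N (grid_scale c u) = grid_scale c (neg_lap_plus_sum h N u)"
    for c u
    by (simp add: fun_eq_iff neg_lap_plus_sum_def grid_scale_def cell_sum_cmult lap_scale
        right_diff_distrib)
  ultimately show ?thesis
    unfolding Vector_Spaces.linear_iff using grid_vs.vector_space_axioms by blast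
qed

lemma cell_sum_neg_lap_plus_sum:
  "per N g \<Longrightarrow> cell_sum N (neg_lap_plus_sum h N g) = real N * real N * cell_sum N g"
  unfolding neg_lap_plus_sum_def by (simp add: cell_sum_diff cell_sum_const cell_sum_lap)

lemma neg_lap_plus_sum_eq_0:
  assumes "per N g" and "N \<ge> 1" and "h \<noteq> 0" and "neg_lap_plus_sum h N g = (\<lambda>_ _. 0)"
  shows "g = (\<lambda>_ _. 0)"
proof -
  have "cell_sum N g = 0"
    using cell_sum_neg_lap_plus_sum[OF assms(1), of h] assms(2,4) by (simp add: cell_sum_const)
  moreover from this have "lap h g i j = 0" for i j
    using fun_cong[OF fun_cong[OF assms(4)], of i j] by (simp add: neg_lap_plus_sum_def)
  ultimately show ?thesis using per_harmonic_zero[OF assms(1-3)] by blast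
qed

lemma poisson_solvable:
  assumes N: "N \<ge> 1" and h: "h \<noteq> 0" and \<nu>: "per N \<nu>" "cell_sum N \<nu> = 0"
  shows "\<exists>\<psi>. per N \<psi> \<and> cell_sum N \<psi> = 0 \<and> (\<forall>i j. - lap h \<psi> i j = \<nu> i j)"
proof -
  let ?T = "neg_lap_plus_sum h N"
  have into: "?T ` {g. per N g} \<subseteq> {g. per N g}"
    using per_lap unfolding neg_lap_plus_sum_def per_def by fastforce
  have "inj_on ?T {g. per N g}"
  proof (rule inj_onI)
    fix u v assume u: "u \<in> {g. per N g}" and v: "v \<in> {g. per N g}" and eq: "?T u = ?T v"
    have "per N (\<lambda>i j. u i j - v i j)" using u v unfolding per_def by simp
    moreover have "?T (\<lambda>i j. u i j - v i j) = (\<lambda>_ _. 0)"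
    proof (intro ext)
      fix i j
      have "cell_sum N u - lap h u i j = cell_sum N v - lap h v i j"
        using fun_cong[OF fun_cong[OF eq], of i j] by (simp add: neg_lap_plus_sum_def)
      then show "?T (\<lambda>i j. u i j - v i j) i j = 0"
        by (simp add: neg_lap_plus_sum_def lap_diff cell_sum_diff)
    qed
    ultimately have "(\<lambda>i j. u i j - v i j) = (\<lambda>_ _. 0)" by (rule neg_lap_plus_sum_eq_0[OF _ N h])
    then show "u = v" by (simp add: fun_eq_iff)
  qed
  then have "{g. per N g} \<subseteq> ?T ` {g. per N g}"
    using grid_vs.linear_inj_on_span_imp_onto[OF linear_neg_lap_plus_sum, of "cell_indicators N"]
      span_cell_indicators[OF N] into by (simp add: cell_indicators_def)
  then obtain \<psi> where \<psi>: "per N \<psi>" and T\<psi>: "?T \<psi> = \<nu>" using \<nu>(1) by blast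
  have "cell_sum N \<psi> = 0"
    using cell_sum_neg_lap_plus_sum[OF \<psi>, of h] \<nu>(2) N by (simp add: T\<psi>)
  moreover have "- lap h \<psi> i j = \<nu> i j" for i j
    using calculation T\<psi> by (auto simp: neg_lap_plus_sum_def)
  ultimately show ?thesis using \<psi> by blast
qed

lemma hgrid_pos: "L > 0 \<Longrightarrow> N \<ge> 1 \<Longrightarrow> hgrid L N > 0"
  by (simp add: hgrid_def)

lemma gmean_eq_cell_sum: "gmean L N u = (hgrid L N)^2 * cell_sum N u / L^2"
  by (simp add: gmean_def ginner_cell_sum)

lemma cell_sum_diff_eq_0:
  assumes "L > 0" and "N \<ge> 1" and "gmean L N u = gmean L N w"
  shows "cell_sum N (\<lambda>i j. u i j - w i j) = 0"
  using assms hgrid_pos[OF assms(1,2)] by (simp add: gmean_eq_cell_sum cell_sum_diff)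

lemma invlap_solves:
  assumes L: "L > 0" and N: "N \<ge> 1" and \<nu>: "per N \<nu>" "cell_sum N \<nu> = 0"
  shows "per N (invlap L N \<nu>) \<and> cell_sum N (invlap L N \<nu>) = 0 \<and>
    (\<forall>i j. - lap (hgrid L N) (invlap L N \<nu>) i j = \<nu> i j)"
proof -
  let ?h = "hgrid L N"
  have h: "?h > 0" using hgrid_pos[OF L N] .
  have mean: "gmean L N \<psi> = 0 \<longleftrightarrow> cell_sum N \<psi> = 0" for \<psi>
    using h L by (simp add: gmean_eq_cell_sum)
  let ?P = "\<lambda>\<psi>. per N \<psi> \<and> gmean L N \<psi> = 0 \<and> (\<forall>i j. - lap ?h \<psi> i j = \<nu> i j)"
  have "\<exists>!\<psi>. ?P \<psi>"
  proof (rule ex_ex1I)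
    show "\<exists>\<psi>. ?P \<psi>" using poisson_solvable[OF N _ \<nu>, of ?h] h mean by auto
  next
    fix \<psi> \<psi>' assume a: "?P \<psi>" and b: "?P \<psi>'"
    have d: "per N (\<lambda>i j. \<psi> i j - \<psi>' i j)" using a b by (simp add: per_def)
    have l: "lap ?h (\<lambda>i j. \<psi> i j - \<psi>' i j) i j = 0" for i j
    proof -
      have "- lap ?h \<psi> i j = - lap ?h \<psi>' i j" using a b by simp
      then show ?thesis by (simp add: lap_diff)
    qed
    have m: "cell_sum N (\<lambda>i j. \<psi> i j - \<psi>' i j) = 0"
      using a b mean by (simp add: cell_sum_diff)
    have "\<psi> i j - \<psi>' i j = 0" for i j
      using per_harmonic_zero[OF d N _ l m] h by simp
    then show "\<psi> = \<psi>'" by (simp add: fun_eq_iff)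
  qed
  from theI'[OF this] show ?thesis unfolding invlap_def mean .
qed

section \<open>Convexity estimates for the energy\<close>

lemma xlnx_tangent_le:
  fixes k x y :: real
  assumes "k > 0" and "x > 0" and "y > 0"
  shows "x * ln (k * x) - y * ln (k * y) \<le> (ln (k * x) + 1) * (x - y)"
proof -
  have "y * ln (x / y) \<le> y * (x / y - 1)"
    using assms by (intro mult_left_mono ln_le_minus_one) auto
  also have "\<dots> = x - y" using assms by (simp add: field_simps)
  finally have "y * (ln x - ln y) \<le> x - y" using assms by (simp add: ln_div)
  then show ?thesis using assms by (simp add: ln_mult algebra_simps)
qed

lemma Sfun_tangent_le:
  assumes "M0 > 0" and "N0 > 0"
    and "a > 0" "b > 0" "a + b < 1" and "a0 > 0" "b0 > 0" "a0 + b0 < 1"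
  shows "Sfun M0 N0 a b - Sfun M0 N0 a0 b0 \<le> dSa M0 N0 a b * (a - a0) + dSb M0 N0 a b * (b - b0)"
proof -
  define ka kb where "ka = alphaM M0 N0 / M0" and "kb = betaM M0 N0 / N0"
  have "sqrt (M0 / pi) + N0 / 2 > 0" using assms(1,2) by (simp add: add_nonneg_pos)
  then have "ka > 0" "kb > 0" using assms(1,2) by (simp_all add: ka_def kb_def alphaM_def betaM_def)
  have "a * ln (ka * a) - a0 * ln (ka * a0) \<le> (ln (ka * a) + 1) * (a - a0)"
    using \<open>ka > 0\<close> assms by (intro xlnx_tangent_le) auto
  then have Sa: "a / M0 * ln (ka * a) - a0 / M0 * ln (ka * a0) \<le> (ln (ka * a) + 1) * (a - a0) / M0"
    using assms(1) by (simp add: diff_divide_distrib[symmetric] divide_right_mono)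
  have "b * ln (kb * b) - b0 * ln (kb * b0) \<le> (ln (kb * b) + 1) * (b - b0)"
    using \<open>kb > 0\<close> assms by (intro xlnx_tangent_le) auto
  then have Sb: "b / N0 * ln (kb * b) - b0 / N0 * ln (kb * b0) \<le> (ln (kb * b) + 1) * (b - b0) / N0"
    using assms(2) by (simp add: diff_divide_distrib[symmetric] divide_right_mono)
  have S3: "(1 - a - b) * ln (1 * (1 - a - b)) - (1 - a0 - b0) * ln (1 * (1 - a0 - b0))
      \<le> (ln (1 * (1 - a - b)) + 1) * ((1 - a - b) - (1 - a0 - b0))"
    using assms by (intro xlnx_tangent_le) auto
  have "Sfun M0 N0 a b - Sfun M0 N0 a0 b0
      = (a / M0 * ln (ka * a) - a0 / M0 * ln (ka * a0)) + (b / N0 * ln (kb * b) - b0 / N0 * ln (kb * b0))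
        + ((1 - a - b) * ln (1 * (1 - a - b)) - (1 - a0 - b0) * ln (1 * (1 - a0 - b0)))"
    unfolding Sfun_def by (simp add: ka_def kb_def)
  moreover have "dSa M0 N0 a b * (a - a0) + dSb M0 N0 a b * (b - b0)
      = (ln (ka * a) + 1) * (a - a0) / M0 + (ln (kb * b) + 1) * (b - b0) / N0
        + (ln (1 * (1 - a - b)) + 1) * ((1 - a - b) - (1 - a0 - b0))"
    unfolding dSa_def dSb_def using assms(1,2) by (simp add: ka_def kb_def field_simps)
  ultimately show ?thesis using Sa Sb S3 by linarith
qed

lemma kappa_sq_tangent_le:
  assumes "s0 > 0" and "s > 0"
  shows "kappa s * d^2 - kappa s0 * d0^2 \<le> kappa' s * d^2 * (s - s0) + 2 * (kappa s * d) * (d - d0)"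
proof -
  have "kappa' s * d^2 * (s - s0) + 2 * (kappa s * d) * (d - d0) - (kappa s * d^2 - kappa s0 * d0^2)
      = (d0 - d * s0 / s)^2 / (36 * s0)"
    using assms by (simp add: kappa_def kappa'_def field_simps power2_eq_square)
  moreover have "(d0 - d * s0 / s)^2 / (36 * s0) \<ge> 0" using assms(1) by simp
  ultimately show ?thesis by linarith
qed

lemma cell_sum_ax: "per N f \<Longrightarrow> cell_sum N (ax f) = cell_sum N f"
  using cell_sum_ax_mult[of N f "\<lambda>_ _. 1"] by (simp add: per_def Ax_def)

lemma cell_sum_ay: "per N f \<Longrightarrow> cell_sum N (ay f) = cell_sum N f"
  using cell_sum_ay_mult[of N f "\<lambda>_ _. 1"] by (simp add: per_def Ay_def)

lemma gradE_cell_sum: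
  assumes "per N v"
  shows "gradE L N v = (hgrid L N)^2 *
    (cell_sum N (\<lambda>i j. kappa (Ax v i j) * (Dx (hgrid L N) v i j)^2)
     + cell_sum N (\<lambda>i j. kappa (Ay v i j) * (Dy (hgrid L N) v i j)^2))"
proof -
  let ?h = "hgrid L N"
  have "per N (\<lambda>i j. kappa (Ax v i j) * (Dx ?h v i j)^2)"
    and "per N (\<lambda>i j. kappa (Ay v i j) * (Dy ?h v i j)^2)"
    using per_Ax[OF assms] per_Dx[OF assms] per_Ay[OF assms] per_Dy[OF assms]
    unfolding per_def by simp_all
  then show ?thesis
    by (simp add: gradE_def ginner_cell_sum cell_sum_add cell_sum_ax cell_sum_ay)
qed

lemma cell_sum_Tk_mult:
  assumes u: "per N u" and d: "per N d"
  shows "cell_sum N (\<lambda>i j. Tk h u i j * d i j) = cell_sum N (\<lambda>i j.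
      kappa' (Ax u i j) * (Dx h u i j)^2 * Ax d i j + 2 * (kappa (Ax u i j) * Dx h u i j * Dx h d i j)
    + kappa' (Ay u i j) * (Dy h u i j)^2 * Ay d i j + 2 * (kappa (Ay u i j) * Dy h u i j * Dy h d i j))"
proof -
  let ?gx = "\<lambda>a b. kappa' (Ax u a b) * (Dx h u a b)^2"
  let ?kx = "\<lambda>a b. kappa (Ax u a b) * Dx h u a b"
  let ?gy = "\<lambda>a b. kappa' (Ay u a b) * (Dy h u a b)^2"
  let ?ky = "\<lambda>a b. kappa (Ay u a b) * Dy h u a b"
  have per: "per N ?gx" "per N ?kx" "per N ?gy" "per N ?ky"
    using per_Ax[OF u] per_Dx[OF u] per_Ay[OF u] per_Dy[OF u] unfolding per_def by simp_all
  have "cell_sum N (\<lambda>i j. Tk h u i j * d i j) =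
      cell_sum N (\<lambda>i j. ax ?gx i j * d i j) - 2 * cell_sum N (\<lambda>i j. dx h ?kx i j * d i j)
    + cell_sum N (\<lambda>i j. ay ?gy i j * d i j) - 2 * cell_sum N (\<lambda>i j. dy h ?ky i j * d i j)"
    by (simp add: Tk_def algebra_simps cell_sum_add[symmetric] cell_sum_diff[symmetric]
        cell_sum_cmult[symmetric])
  also have "\<dots> = cell_sum N (\<lambda>i j. ?gx i j * Ax d i j) + 2 * cell_sum N (\<lambda>i j. ?kx i j * Dx h d i j)
    + cell_sum N (\<lambda>i j. ?gy i j * Ay d i j) + 2 * cell_sum N (\<lambda>i j. ?ky i j * Dy h d i j)"
    using cell_sum_ax_mult[OF per(1) d] cell_sum_dx_mult[OF per(2) d, of h]
      cell_sum_ay_mult[OF per(3) d] cell_sum_dy_mult[OF per(4) d, of h] by simp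
  also have "\<dots> = cell_sum N (\<lambda>i j.
      kappa' (Ax u i j) * (Dx h u i j)^2 * Ax d i j + 2 * (kappa (Ax u i j) * Dx h u i j * Dx h d i j)
    + kappa' (Ay u i j) * (Dy h u i j)^2 * Ay d i j + 2 * (kappa (Ay u i j) * Dy h u i j * Dy h d i j))"
    by (simp add: cell_sum_add cell_sum_cmult mult.assoc)
  finally show ?thesis .
qed

lemma gradE_tangent_le:
  assumes u: "per N u" and w: "per N w" and pos: "\<And>i j. u i j > 0" "\<And>i j. w i j > 0"
  shows "gradE L N u - gradE L N w \<le> ginner L N (Tk (hgrid L N) u) (\<lambda>i j. u i j - w i j)"
proof -
  let ?h = "hgrid L N"
  let ?d = "\<lambda>i j. u i j - w i j"
  have pos_faces: "Ax u i j > 0" "Ax w i j > 0" "Ay u i j > 0" "Ay w i j > 0" for i j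
    using pos[of i j] pos[of "i + 1" j] pos[of i "j + 1"] by (simp_all add: Ax_def Ay_def)
  have Ad: "Ax ?d i j = Ax u i j - Ax w i j" "Ay ?d i j = Ay u i j - Ay w i j" for i j
    by (simp_all add: Ax_def Ay_def field_simps)
  have Dd: "Dx ?h ?d i j = Dx ?h u i j - Dx ?h w i j" "Dy ?h ?d i j = Dy ?h u i j - Dy ?h w i j"
    for i j by (simp_all add: Dx_def Dy_def diff_divide_distrib)
  have pt: "(kappa (Ax u i j) * (Dx ?h u i j)^2 + kappa (Ay u i j) * (Dy ?h u i j)^2)
      - (kappa (Ax w i j) * (Dx ?h w i j)^2 + kappa (Ay w i j) * (Dy ?h w i j)^2)
    \<le> kappa' (Ax u i j) * (Dx ?h u i j)^2 * Ax ?d i j + 2 * (kappa (Ax u i j) * Dx ?h u i j * Dx ?h ?d i j)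
    + kappa' (Ay u i j) * (Dy ?h u i j)^2 * Ay ?d i j + 2 * (kappa (Ay u i j) * Dy ?h u i j * Dy ?h ?d i j)"
    for i j
    using kappa_sq_tangent_le[OF pos_faces(2,1)[of i j], of "Dx ?h u i j" "Dx ?h w i j"]
      kappa_sq_tangent_le[OF pos_faces(4,3)[of i j], of "Dy ?h u i j" "Dy ?h w i j"]
    unfolding Ad Dd by (simp add: algebra_simps)
  have "per N ?d" using u w unfolding per_def by simp
  have "gradE L N u - gradE L N w = ?h^2 * cell_sum N (\<lambda>i j.
        (kappa (Ax u i j) * (Dx ?h u i j)^2 + kappa (Ay u i j) * (Dy ?h u i j)^2)
      - (kappa (Ax w i j) * (Dx ?h w i j)^2 + kappa (Ay w i j) * (Dy ?h w i j)^2))"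
    unfolding gradE_cell_sum[OF u] gradE_cell_sum[OF w]
    by (simp add: cell_sum_add cell_sum_diff algebra_simps)
  also have "\<dots> \<le> ?h^2 * cell_sum N (\<lambda>i j. Tk ?h u i j * ?d i j)"
    unfolding cell_sum_Tk_mult[OF u \<open>per N ?d\<close>] by (intro mult_left_mono cell_sum_mono pt) simp
  also have "\<dots> = ginner L N (Tk ?h u) ?d" by (simp add: ginner_cell_sum)
  finally show ?thesis .
qed

lemma neg_quadratic_le: "k > 0 \<Longrightarrow> - k * x^2 + x * f \<le> f^2 / (4 * k)"
  for k x f :: real
proof -
  assume k: "k > 0"
  have "f^2 / (4 * k) - (- k * x^2 + x * f) = (2 * k * x - f)^2 / (4 * k)"
    using k by (simp add: field_simps power2_eq_square)
  moreover have "(2 * k * x - f)^2 / (4 * k) \<ge> 0" using k by simp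
  ultimately show ?thesis by linarith
qed

text \<open>The extrapolation error is a concave quadratic in the old increment \<open>p - q\<close>;
  maximising it out leaves only squares of the new increment \<open>r - p\<close>.\<close>

lemma Hfun_extrapolation_le:
  fixes c12 c13 c23 :: real
  assumes c13: "c13 > 0" and c23: "c23 > 0" and disc: "4 * c13 * c23 - (c12 - c13 - c23)^2 > 0"
  shows "Hfun c12 c13 c23 r1 r2 - Hfun c12 c13 c23 p1 p2
    \<le> dHa c12 c13 c23 (2 * p1 - q1) (2 * p2 - q2) * (r1 - p1)
      + dHb c12 c13 c23 (2 * p1 - q1) (2 * p2 - q2) * (r2 - p2)
      + c13 * (p1 - q1)^2 + c23 * (p2 - q2)^2
      + (c13 + \<bar>c12 - c13 - c23\<bar> / 2) * (r1 - p1)^2 + (c23 + \<bar>c12 - c13 - c23\<bar> / 2) * (r2 - p2)^2"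
proof -
  define c a1 a2 b1 b2 where "c = c12 - c13 - c23"
    and "a1 = r1 - p1" and "a2 = r2 - p2" and "b1 = p1 - q1" and "b2 = p2 - q2"
  have "Hfun c12 c13 c23 r1 r2 - Hfun c12 c13 c23 p1 p2
      = dHa c12 c13 c23 (2 * p1 - q1) (2 * p2 - q2) * a1 + dHb c12 c13 c23 (2 * p1 - q1) (2 * p2 - q2) * a2
        + c13 * b1^2 + c23 * b2^2 - c13 * a1^2 - c23 * a2^2
        + ((- c13 * b1^2 + b1 * (2 * c13 * a1 - c * a2)) + (- c23 * b2^2 + b2 * (2 * c23 * a2 - c * a1))
           + c * a1 * a2)"
    unfolding Hfun_def dHa_def dHb_def c_def a1_def a2_def b1_def b2_def
    by (simp add: power2_eq_square algebra_simps)
  moreover have "- c13 * b1^2 + b1 * (2 * c13 * a1 - c * a2) \<le> c13 * a1^2 - c * a1 * a2 + c^2 * a2^2 / (4 * c13)"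
    using neg_quadratic_le[OF c13, of b1 "2 * c13 * a1 - c * a2"] c13
    by (simp add: field_simps power2_eq_square)
  moreover have "- c23 * b2^2 + b2 * (2 * c23 * a2 - c * a1) \<le> c23 * a2^2 - c * a1 * a2 + c^2 * a1^2 / (4 * c23)"
    using neg_quadratic_le[OF c23, of b2 "2 * c23 * a2 - c * a1"] c23
    by (simp add: field_simps power2_eq_square)
  moreover have "c^2 * a2^2 / (4 * c13) \<le> c23 * a2^2" and "c^2 * a1^2 / (4 * c23) \<le> c13 * a1^2"
  proof -
    have "c^2 / (4 * c13) \<le> c23" "c^2 / (4 * c23) \<le> c13"
      using disc c13 c23 by (simp_all add: c_def field_simps)
    then show "c^2 * a2^2 / (4 * c13) \<le> c23 * a2^2" "c^2 * a1^2 / (4 * c23) \<le> c13 * a1^2"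
      by (metis mult.commute times_divide_eq_right mult_right_mono zero_le_power2)+
  qed
  moreover have "- c * a1 * a2 \<le> \<bar>c\<bar> / 2 * a1^2 + \<bar>c\<bar> / 2 * a2^2"
  proof -
    have "- c * a1 * a2 \<le> \<bar>c\<bar> * \<bar>a1 * a2\<bar>" by (simp add: abs_mult[symmetric])
    moreover have "2 * \<bar>a1 * a2\<bar> \<le> a1^2 + a2^2"
      using sum_squares_bound[of "\<bar>a1\<bar>" "\<bar>a2\<bar>"] by (simp add: abs_mult)
    then have "\<bar>c\<bar> * (2 * \<bar>a1 * a2\<bar>) \<le> \<bar>c\<bar> * (a1^2 + a2^2)" by (intro mult_left_mono) auto
    ultimately show ?thesis by (simp add: algebra_simps)
  qed
  ultimately show ?thesis unfolding a1_def a2_def b1_def b2_def c_def by (simp add: algebra_simps)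
qed

lemma stabilization_coeff_le: "3 / 8 * (2 * c13 + \<bar>c\<bar> / 2)^2 \<le> 2 * c13^2 + c^2 / 2"
  for c13 c :: real
proof -
  have "2 * c13^2 + c^2 / 2 - 3 / 8 * (2 * c13 + \<bar>c\<bar> / 2)^2 = (c13 - 3/4 * \<bar>c\<bar>)^2 / 2 + \<bar>c\<bar>^2 / 8"
    by (simp add: power2_eq_square field_simps)
  moreover have "(c13 - 3/4 * \<bar>c\<bar>)^2 / 2 + \<bar>c\<bar>^2 / 8 \<ge> 0" by simp
  ultimately show ?thesis by linarith
qed

section \<open>The BDF2 step\<close>

lemma cell_sum_mult_eq_dirichlet:
  assumes "per N \<psi>" and "per N w" and "\<And>i j. - lap h \<psi> i j = \<nu> i j"
  shows "cell_sum N (\<lambda>i j. \<nu> i j * w i j) = dirichlet h N \<psi> w"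
proof -
  have "cell_sum N (\<lambda>i j. \<nu> i j * w i j) = - cell_sum N (\<lambda>i j. lap h \<psi> i j * w i j)"
    by (simp add: cell_sum_neg[symmetric] flip: assms(3))
  then show ?thesis using cell_sum_lap_mult[OF assms(1,2)] by simp
qed

lemma bdf2_difference_term:
  assumes per: "per N \<mu>" "per N \<psi>" "per N \<phi>"
    and \<psi>: "\<And>i j. - lap h \<psi> i j = a i j" and \<phi>: "\<And>i j. - lap h \<phi> i j = b i j"
    and \<mu>: "\<And>i j. lap h \<mu> i j = (3 * a i j - b i j) / (2 * dt)"
  shows "cell_sum N (\<lambda>i j. \<mu> i j * a i j) = (dirichlet h N \<phi> \<psi> - 3 * dirichlet h N \<psi> \<psi>) / (2 * dt)"
proof -
  have "cell_sum N (\<lambda>i j. \<mu> i j * a i j) = dirichlet h N \<psi> \<mu>"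
    using cell_sum_mult_eq_dirichlet[OF per(2,1) \<psi>] by (simp add: mult.commute)
  also have "\<dots> = - cell_sum N (\<lambda>i j. lap h \<mu> i j * \<psi> i j)"
    using cell_sum_lap_mult[OF per(1,2)] dirichlet_commute by simp
  also have "\<dots> = (cell_sum N (\<lambda>i j. b i j * \<psi> i j) - 3 * cell_sum N (\<lambda>i j. a i j * \<psi> i j)) / (2 * dt)"
    by (simp add: \<mu> cell_sum_cmult[symmetric] cell_sum_diff[symmetric] cell_sum_neg[symmetric]
        cell_sum_divide[symmetric] left_diff_distrib minus_divide_left mult.assoc)
  also have "\<dots> = (dirichlet h N \<phi> \<psi> - 3 * dirichlet h N \<psi> \<psi>) / (2 * dt)"
    using cell_sum_mult_eq_dirichlet[OF per(2,2) \<psi>] cell_sum_mult_eq_dirichlet[OF per(3,2) \<phi>] by simp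
  finally show ?thesis .
qed

lemma stabilization_le:
  assumes "0 \<le> \<beta>" and dt: "dt > 0" and "3 / 8 * \<beta>^2 \<le> A"
    and "per N \<psi>" "per N a" "\<And>i j. - lap h \<psi> i j = a i j"
  shows "\<beta> * cell_sum N (\<lambda>i j. a i j * a i j)
    \<le> 2 / (3 * dt) * dirichlet h N \<psi> \<psi> + A * dt * dirichlet h N a a"
proof -
  define k where "k = 3 * \<beta> * dt / 4"
  have "\<beta> * cell_sum N (\<lambda>i j. a i j * a i j) = 2 / (3 * dt) * (2 * k * dirichlet h N \<psi> a)"
    using cell_sum_mult_eq_dirichlet[OF assms(4-6)] dt by (simp add: k_def field_simps)
  also have "\<dots> \<le> 2 / (3 * dt) * (dirichlet h N \<psi> \<psi> + k^2 * dirichlet h N a a)"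
    using dirichlet_young dt by (intro mult_left_mono) auto
  also have "\<dots> = 2 / (3 * dt) * dirichlet h N \<psi> \<psi> + 3 / 8 * \<beta>^2 * dt * dirichlet h N a a"
    using dt by (simp add: k_def field_simps power2_eq_square)
  also have "\<dots> \<le> 2 / (3 * dt) * dirichlet h N \<psi> \<psi> + A * dt * dirichlet h N a a"
    using assms(3) dt dirichlet_self_nonneg by (intro add_left_mono mult_right_mono) auto
  finally show ?thesis .
qed

lemma norm_m1_sq:
  assumes "L > 0" and "N \<ge> 1" and "per N \<nu>" and "cell_sum N \<nu> = 0"
  shows "(norm_m1 L N \<nu>)^2 = (hgrid L N)^2 * dirichlet (hgrid L N) N (invlap L N \<nu>) (invlap L N \<nu>)"
proof -
  have "per N (invlap L N \<nu>)" and "\<And>i j. - lap (hgrid L N) (invlap L N \<nu>) i j = \<nu> i j"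
    using invlap_solves[OF assms] by auto
  from cell_sum_mult_eq_dirichlet[OF this(1) this(1) this(2)]
  have "inner_m1 L N \<nu> \<nu> = (hgrid L N)^2 * dirichlet (hgrid L N) N (invlap L N \<nu>) (invlap L N \<nu>)"
    by (simp add: inner_m1_def ginner_cell_sum)
  then show ?thesis by (simp add: norm_m1_def dirichlet_self_nonneg)
qed

lemma gnorm2_sq: "(gnorm2 L N u)^2 = ginner L N u u"
  by (simp add: gnorm2_def ginner_cell_sum cell_sum_nonneg)

text \<open>The share of one component in \<open>F\<^sub>h\<^sup>n\<^sup>+\<^sup>1 - F\<^sub>h\<^sup>n\<close>: \<open>r, p, q\<close> are the time
  levels \<open>n+1, n, n-1\<close> and \<open>f\<close> is the chemical potential without its stabilisation term.\<close>

definition step_defect :: "real \<Rightarrow> nat \<Rightarrow> real \<Rightarrow> real \<Rightarrow> grid \<Rightarrow> grid \<Rightarrow> grid \<Rightarrow> grid \<Rightarrow> real"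
  where "step_defect L N dt \<beta> f r p q =
    ginner L N f (\<lambda>i j. r i j - p i j) + \<beta> * (gnorm2 L N (\<lambda>i j. r i j - p i j))^2
    + 3 / (4 * dt) * ((norm_m1 L N (\<lambda>i j. r i j - p i j))^2 - (norm_m1 L N (\<lambda>i j. p i j - q i j))^2)"

lemma bdf2_energy_test_nonpos:
  assumes dt: "dt > 0" and \<beta>: "0 \<le> \<beta>" "3 / 8 * \<beta>^2 \<le> A"
    and per: "per N f" "per N a" "per N \<psi>" "per N \<phi>"
    and \<psi>: "\<And>i j. - lap h \<psi> i j = a i j" and \<phi>: "\<And>i j. - lap h \<phi> i j = b i j"
    and scheme: "\<And>i j. lap h (\<lambda>i j. f i j - A * dt * lap h a i j) i j = (3 * a i j - b i j) / (2 * dt)"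
  shows "cell_sum N (\<lambda>i j. f i j * a i j) + \<beta> * cell_sum N (\<lambda>i j. a i j * a i j)
    + 3 / (4 * dt) * (dirichlet h N \<psi> \<psi> - dirichlet h N \<phi> \<phi>) \<le> 0"
proof -
  define \<mu> where "\<mu> = (\<lambda>i j. f i j - A * dt * lap h a i j)"
  have "per N \<mu>" using per(1,2) per_lap[OF per(2)] unfolding \<mu>_def per_def by simp
  define X Xb C Y where "X = dirichlet h N \<psi> \<psi>" and "Xb = dirichlet h N \<phi> \<phi>"
    and "C = dirichlet h N \<phi> \<psi>" and "Y = dirichlet h N a a"
  have fa: "cell_sum N (\<lambda>i j. f i j * a i j) = cell_sum N (\<lambda>i j. \<mu> i j * a i j) - A * dt * Y"
    using cell_sum_lap_mult[OF per(2,2), of h]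
    by (simp add: \<mu>_def Y_def left_diff_distrib cell_sum_diff cell_sum_cmult mult.assoc)
  have time: "cell_sum N (\<lambda>i j. \<mu> i j * a i j) = (C - 3 * X) / (2 * dt)"
    unfolding C_def X_def
    by (rule bdf2_difference_term[OF \<open>per N \<mu>\<close> per(3,4) \<psi> \<phi>]) (simp add: \<mu>_def scheme)
  have stab: "\<beta> * cell_sum N (\<lambda>i j. a i j * a i j) \<le> 2 / (3 * dt) * X + A * dt * Y"
    unfolding X_def Y_def by (rule stabilization_le[OF \<beta>(1) dt \<beta>(2) per(3,2) \<psi>])
  have cross: "C \<le> 3 / 2 * Xb + 1 / 6 * X"
    using dirichlet_young[of "1 / 3" h N \<phi> \<psi>] unfolding C_def X_def Xb_def
    by (simp add: power2_eq_square dirichlet_commute)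
  \<comment> \<open>the coefficients of \<open>X / dt\<close> cancel exactly: \<open>-3/2 + 1/12 + 2/3 + 3/4 = 0\<close>\<close>
  have "(C - 3 * X) / (2 * dt) + 2 / (3 * dt) * X + 3 / (4 * dt) * (X - Xb)
      = (C / 2 - X / 12 - 3 / 4 * Xb) / dt"
    using dt by (simp add: field_simps)
  moreover have "(C / 2 - X / 12 - 3 / 4 * Xb) / dt \<le> 0"
    using cross dt by (intro divide_nonpos_pos) auto
  ultimately show ?thesis unfolding X_def[symmetric] Xb_def[symmetric] using fa time stab by linarith
qed

lemma step_defect_nonpos:
  assumes L: "L > 0" and N: "N \<ge> 1" and dt: "dt > 0" and \<beta>: "0 \<le> \<beta>" "3 / 8 * \<beta>^2 \<le> A"
    and per: "per N f" "per N r" "per N p" "per N q"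
    and mean: "gmean L N q = gmean L N p" "gmean L N p = gmean L N r"
    and scheme: "\<And>i j. (3 * r i j - 4 * p i j + q i j) / (2 * dt)
      = lap (hgrid L N) (\<lambda>i j. f i j - A * dt * lap (hgrid L N) (\<lambda>a b. r a b - p a b) i j) i j"
  shows "step_defect L N dt \<beta> f r p q \<le> 0"
proof -
  define a b where "a = (\<lambda>i j. r i j - p i j)" and "b = (\<lambda>i j. p i j - q i j)"
  have per_ab: "per N a" "per N b" using per unfolding a_def b_def per_def by simp_all
  have mean_ab: "cell_sum N a = 0" "cell_sum N b = 0"
    unfolding a_def b_def using cell_sum_diff_eq_0[OF L N] mean by (metis (no_types))+
  define h \<psi> \<phi> where "h = hgrid L N" and "\<psi> = invlap L N a" and "\<phi> = invlap L N b"
  have \<psi>: "per N \<psi>" "\<And>i j. - lap h \<psi> i j = a i j"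
    using invlap_solves[OF L N per_ab(1) mean_ab(1)] unfolding \<psi>_def h_def by auto
  have \<phi>: "per N \<phi>" "\<And>i j. - lap h \<phi> i j = b i j"
    using invlap_solves[OF L N per_ab(2) mean_ab(2)] unfolding \<phi>_def h_def by auto
  have "lap h (\<lambda>i j. f i j - A * dt * lap h a i j) i j = (3 * a i j - b i j) / (2 * dt)" for i j
    unfolding h_def a_def b_def by (subst scheme[symmetric]) (simp add: algebra_simps)
  then have "cell_sum N (\<lambda>i j. f i j * a i j) + \<beta> * cell_sum N (\<lambda>i j. a i j * a i j)
      + 3 / (4 * dt) * (dirichlet h N \<psi> \<psi> - dirichlet h N \<phi> \<phi>) \<le> 0"
    by (rule bdf2_energy_test_nonpos[OF dt \<beta> per(1) per_ab(1) \<psi>(1) \<phi>(1) \<psi>(2) \<phi>(2)])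
  moreover have "step_defect L N dt \<beta> f r p q
      = h^2 * (cell_sum N (\<lambda>i j. f i j * a i j) + \<beta> * cell_sum N (\<lambda>i j. a i j * a i j)
               + 3 / (4 * dt) * (dirichlet h N \<psi> \<psi> - dirichlet h N \<phi> \<phi>))"
    using norm_m1_sq[OF L N per_ab(1) mean_ab(1)] norm_m1_sq[OF L N per_ab(2) mean_ab(2)]
    unfolding step_defect_def a_def[symmetric] b_def[symmetric] gnorm2_sq ginner_cell_sum
      \<psi>_def \<phi>_def h_def
    by (simp add: algebra_simps)
  ultimately show ?thesis by (simp add: mult_nonneg_nonpos)
qed

lemma per_Tk:
  assumes "per N u"
  shows "per N (Tk h u)"
proof -
  have "per N (\<lambda>a b. kappa' (Ax u a b) * (Dx h u a b)^2)" "per N (\<lambda>a b. kappa (Ax u a b) * Dx h u a b)"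
    "per N (\<lambda>a b. kappa' (Ay u a b) * (Dy h u a b)^2)" "per N (\<lambda>a b. kappa (Ay u a b) * Dy h u a b)"
    using per_Ax[OF assms] per_Dx[OF assms] per_Ay[OF assms] per_Dy[OF assms]
    unfolding per_def by simp_all
  from per_ax[OF this(1)] per_dx[OF this(2)] per_ay[OF this(3)] per_dy[OF this(4)] show ?thesis
    unfolding per_def Tk_def by simp
qed

lemma per_dGc1: "per N r1 \<Longrightarrow> per N r2 \<Longrightarrow> per N (dGc1 L N M0 N0 e1 e3 r1 r2)"
  using per_Tk[of N r1] per_Tk[of N "\<lambda>a b. 1 - r1 a b - r2 a b"]
  unfolding per_def dGc1_def by simp

lemma per_dGc2: "per N r1 \<Longrightarrow> per N r2 \<Longrightarrow> per N (dGc2 L N M0 N0 e2 e3 r1 r2)"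
  using per_Tk[of N r2] per_Tk[of N "\<lambda>a b. 1 - r1 a b - r2 a b"]
  unfolding per_def dGc2_def by simp

lemma bulk_energy_step_le:
  assumes "M0 > 0" "N0 > 0" "c13 > 0" "c23 > 0" "4 * c13 * c23 - (c12 - c13 - c23)^2 > 0"
    and "p1 > 0" "p2 > 0" "p1 + p2 < 1" and "r1 > 0" "r2 > 0" "r1 + r2 < 1"
  shows "Sfun M0 N0 r1 r2 + Hfun c12 c13 c23 r1 r2 - (Sfun M0 N0 p1 p2 + Hfun c12 c13 c23 p1 p2)
    \<le> (dSa M0 N0 r1 r2 + dHa c12 c13 c23 (2 * p1 - q1) (2 * p2 - q2)) * (r1 - p1)
      + (dSb M0 N0 r1 r2 + dHb c12 c13 c23 (2 * p1 - q1) (2 * p2 - q2)) * (r2 - p2)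
      + c13 * (p1 - q1)^2 + c23 * (p2 - q2)^2
      + (c13 + \<bar>c12 - c13 - c23\<bar> / 2) * (r1 - p1)^2 + (c23 + \<bar>c12 - c13 - c23\<bar> / 2) * (r2 - p2)^2"
  using Sfun_tangent_le[OF assms(1,2) assms(9-11) assms(6-8)]
    Hfun_extrapolation_le[OF assms(3-5), of r1 r2 p1 p2 q1 q2]
  by (simp add: distrib_right)

lemma gradient_energy_step_le:
  assumes p: "gibbs N p1 p2" and r: "gibbs N r1 r2"
  shows "e1^2 * (gradE L N r1 - gradE L N p1) + e2^2 * (gradE L N r2 - gradE L N p2)
      + e3^2 * (gradE L N (\<lambda>i j. 1 - r1 i j - r2 i j) - gradE L N (\<lambda>i j. 1 - p1 i j - p2 i j))
    \<le> (hgrid L N)^2 * cell_sum N (\<lambda>i j.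
        (e1^2 * Tk (hgrid L N) r1 i j - e3^2 * Tk (hgrid L N) (\<lambda>a b. 1 - r1 a b - r2 a b) i j)
          * (r1 i j - p1 i j)
      + (e2^2 * Tk (hgrid L N) r2 i j - e3^2 * Tk (hgrid L N) (\<lambda>a b. 1 - r1 a b - r2 a b) i j)
          * (r2 i j - p2 i j))"
proof -
  let ?h = "hgrid L N"
  let ?u3r = "\<lambda>i j. 1 - r1 i j - r2 i j" and ?u3p = "\<lambda>i j. 1 - p1 i j - p2 i j"
  have pp: "per N p1" "per N p2" "\<And>i j. 0 < p1 i j" "\<And>i j. 0 < p2 i j" "\<And>i j. p1 i j + p2 i j < 1"
    and pr: "per N r1" "per N r2" "\<And>i j. 0 < r1 i j" "\<And>i j. 0 < r2 i j" "\<And>i j. r1 i j + r2 i j < 1"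
    using p r unfolding gibbs_def by auto
  have "per N ?u3r" "per N ?u3p" using pp pr unfolding per_def by simp_all
  have "0 < ?u3r i j" "0 < ?u3p i j" for i j using pr(5)[of i j] pp(5)[of i j] by linarith+
  have "gradE L N r1 - gradE L N p1 \<le> ?h^2 * cell_sum N (\<lambda>i j. Tk ?h r1 i j * (r1 i j - p1 i j))"
    "gradE L N r2 - gradE L N p2 \<le> ?h^2 * cell_sum N (\<lambda>i j. Tk ?h r2 i j * (r2 i j - p2 i j))"
    "gradE L N ?u3r - gradE L N ?u3p
      \<le> ?h^2 * cell_sum N (\<lambda>i j. Tk ?h ?u3r i j * (?u3r i j - ?u3p i j))"
    using gradE_tangent_le[OF pr(1) pp(1) pr(3) pp(3), of L] gradE_tangent_le[OF pr(2) pp(2) pr(4) pp(4), of L]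
      gradE_tangent_le[OF \<open>per N ?u3r\<close> \<open>per N ?u3p\<close> \<open>0 < ?u3r _ _\<close> \<open>0 < ?u3p _ _\<close>, of L]
    by (simp_all add: ginner_cell_sum)
  then have "e1^2 * (gradE L N r1 - gradE L N p1) + e2^2 * (gradE L N r2 - gradE L N p2)
      + e3^2 * (gradE L N ?u3r - gradE L N ?u3p)
    \<le> e1^2 * (?h^2 * cell_sum N (\<lambda>i j. Tk ?h r1 i j * (r1 i j - p1 i j)))
      + e2^2 * (?h^2 * cell_sum N (\<lambda>i j. Tk ?h r2 i j * (r2 i j - p2 i j)))
      + e3^2 * (?h^2 * cell_sum N (\<lambda>i j. Tk ?h ?u3r i j * (?u3r i j - ?u3p i j)))"
    by (intro add_mono mult_left_mono) simp_all
  also have "\<dots> = ?h^2 * cell_sum N (\<lambda>i j.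
        (e1^2 * Tk ?h r1 i j - e3^2 * Tk ?h ?u3r i j) * (r1 i j - p1 i j)
      + (e2^2 * Tk ?h r2 i j - e3^2 * Tk ?h ?u3r i j) * (r2 i j - p2 i j))"
    by (simp add: cell_sum_add[symmetric] cell_sum_cmult[symmetric] algebra_simps)
  finally show ?thesis .
qed

lemma Gh_step_le:
  assumes M: "M0 > 0" "N0 > 0" and c: "c13 > 0" "c23 > 0" "4 * c13 * c23 - (c12 - c13 - c23)^2 > 0"
    and p: "gibbs N p1 p2" and r: "gibbs N r1 r2"
  shows "Gh L N M0 N0 c12 c13 c23 e1 e2 e3 r1 r2 - Gh L N M0 N0 c12 c13 c23 e1 e2 e3 p1 p2
    \<le> ginner L N (\<lambda>i j. dGc1 L N M0 N0 e1 e3 r1 r2 i j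
          + dHa c12 c13 c23 (2 * p1 i j - q1 i j) (2 * p2 i j - q2 i j)) (\<lambda>i j. r1 i j - p1 i j)
      + ginner L N (\<lambda>i j. dGc2 L N M0 N0 e2 e3 r1 r2 i j
          + dHb c12 c13 c23 (2 * p1 i j - q1 i j) (2 * p2 i j - q2 i j)) (\<lambda>i j. r2 i j - p2 i j)
      + c13 * (gnorm2 L N (\<lambda>i j. p1 i j - q1 i j))^2 + c23 * (gnorm2 L N (\<lambda>i j. p2 i j - q2 i j))^2
      + (c13 + \<bar>c12 - c13 - c23\<bar> / 2) * (gnorm2 L N (\<lambda>i j. r1 i j - p1 i j))^2
      + (c23 + \<bar>c12 - c13 - c23\<bar> / 2) * (gnorm2 L N (\<lambda>i j. r2 i j - p2 i j))^2"
proof -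
  let ?h = "hgrid L N"
  have pos: "\<And>i j. 0 < p1 i j" "\<And>i j. 0 < p2 i j" "\<And>i j. p1 i j + p2 i j < 1"
    "\<And>i j. 0 < r1 i j" "\<And>i j. 0 < r2 i j" "\<And>i j. r1 i j + r2 i j < 1"
    using p r unfolding gibbs_def by auto
  have "Gh L N M0 N0 c12 c13 c23 e1 e2 e3 r1 r2 - Gh L N M0 N0 c12 c13 c23 e1 e2 e3 p1 p2
    = ?h^2 * cell_sum N (\<lambda>i j. Sfun M0 N0 (r1 i j) (r2 i j) + Hfun c12 c13 c23 (r1 i j) (r2 i j)
        - (Sfun M0 N0 (p1 i j) (p2 i j) + Hfun c12 c13 c23 (p1 i j) (p2 i j)))
      + (e1^2 * (gradE L N r1 - gradE L N p1) + e2^2 * (gradE L N r2 - gradE L N p2)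
      + e3^2 * (gradE L N (\<lambda>i j. 1 - r1 i j - r2 i j) - gradE L N (\<lambda>i j. 1 - p1 i j - p2 i j)))"
    unfolding Gh_def ginner_cell_sum by (simp add: cell_sum_diff algebra_simps)
  also have "\<dots> \<le> ?h^2 * cell_sum N (\<lambda>i j.
        (dSa M0 N0 (r1 i j) (r2 i j) + dHa c12 c13 c23 (2 * p1 i j - q1 i j) (2 * p2 i j - q2 i j))
          * (r1 i j - p1 i j)
      + (dSb M0 N0 (r1 i j) (r2 i j) + dHb c12 c13 c23 (2 * p1 i j - q1 i j) (2 * p2 i j - q2 i j))
          * (r2 i j - p2 i j)
      + c13 * (p1 i j - q1 i j)^2 + c23 * (p2 i j - q2 i j)^2
      + (c13 + \<bar>c12 - c13 - c23\<bar> / 2) * (r1 i j - p1 i j)^2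
      + (c23 + \<bar>c12 - c13 - c23\<bar> / 2) * (r2 i j - p2 i j)^2)
    + ?h^2 * cell_sum N (\<lambda>i j.
        (e1^2 * Tk ?h r1 i j - e3^2 * Tk ?h (\<lambda>a b. 1 - r1 a b - r2 a b) i j) * (r1 i j - p1 i j)
      + (e2^2 * Tk ?h r2 i j - e3^2 * Tk ?h (\<lambda>a b. 1 - r1 a b - r2 a b) i j) * (r2 i j - p2 i j))"
    by (intro add_mono mult_left_mono cell_sum_mono bulk_energy_step_le[OF M c]
        gradient_energy_step_le[OF p r]) (simp_all add: pos)
  also have "\<dots> = ginner L N (\<lambda>i j. dGc1 L N M0 N0 e1 e3 r1 r2 i j
          + dHa c12 c13 c23 (2 * p1 i j - q1 i j) (2 * p2 i j - q2 i j)) (\<lambda>i j. r1 i j - p1 i j)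
      + ginner L N (\<lambda>i j. dGc2 L N M0 N0 e2 e3 r1 r2 i j
          + dHb c12 c13 c23 (2 * p1 i j - q1 i j) (2 * p2 i j - q2 i j)) (\<lambda>i j. r2 i j - p2 i j)
      + c13 * (gnorm2 L N (\<lambda>i j. p1 i j - q1 i j))^2 + c23 * (gnorm2 L N (\<lambda>i j. p2 i j - q2 i j))^2
      + (c13 + \<bar>c12 - c13 - c23\<bar> / 2) * (gnorm2 L N (\<lambda>i j. r1 i j - p1 i j))^2
      + (c23 + \<bar>c12 - c13 - c23\<bar> / 2) * (gnorm2 L N (\<lambda>i j. r2 i j - p2 i j))^2"
    unfolding gnorm2_sq ginner_cell_sum dGc1_def dGc2_def
    by (simp add: cell_sum_add[symmetric] cell_sum_cmult[symmetric] power2_eq_square algebra_simps)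
  finally show ?thesis .
qed

lemma Fh_step_le:
  assumes "M0 > 0" "N0 > 0" "c13 > 0" "c23 > 0" "4 * c13 * c23 - (c12 - c13 - c23)^2 > 0"
    and "gibbs N p1 p2" and "gibbs N r1 r2"
  shows "Fh L N M0 N0 c12 c13 c23 e1 e2 e3 dt r1 r2 p1 p2 - Fh L N M0 N0 c12 c13 c23 e1 e2 e3 dt p1 p2 q1 q2
    \<le> step_defect L N dt (2 * c13 + \<bar>c12 - c13 - c23\<bar> / 2)
        (\<lambda>i j. dGc1 L N M0 N0 e1 e3 r1 r2 i j + dHa c12 c13 c23 (2 * p1 i j - q1 i j) (2 * p2 i j - q2 i j))
        r1 p1 q1
      + step_defect L N dt (2 * c23 + \<bar>c12 - c13 - c23\<bar> / 2)
        (\<lambda>i j. dGc2 L N M0 N0 e2 e3 r1 r2 i j + dHb c12 c13 c23 (2 * p1 i j - q1 i j) (2 * p2 i j - q2 i j))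
        r2 p2 q2"
  using Gh_step_le[OF assms, of L e1 e2 e3 q1 q2]
  unfolding Fh_def step_defect_def
  by (simp add: algebra_simps)

theorem mainTheorem3:
  fixes L dt M0 N0 c12 c13 c23 e1 e2 e3 :: real and N :: nat
    and q1 q2 p1 p2 r1 r2 :: grid
  assumes "L > 0" and "N \<ge> 1" and "dt > 0"
    and "M0 > 0" and "N0 > 0"
    and "e1 > 0" and "e2 > 0" and "e3 > 0"
    and "c12 > 0" and "c13 > 0" and "c23 > 0"
    and "4 * c13 * c23 - (c12 - c13 - c23)^2 > 0"
    and "gibbs N q1 q2" and "gibbs N p1 p2" and "gibbs N r1 r2"
    and "gmean L N q1 = gmean L N p1" and "gmean L N p1 = gmean L N r1"
    and "gmean L N q2 = gmean L N p2" and "gmean L N p2 = gmean L N r2"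
    and "bdf2_step L N M0 N0 c12 c13 c23 e1 e2 e3 1 1 dt
           (2 * c13^2 + (c12 - c13 - c23)^2 / 2) (2 * c23^2 + (c12 - c13 - c23)^2 / 2)
           q1 q2 p1 p2 r1 r2"
  shows "Fh L N M0 N0 c12 c13 c23 e1 e2 e3 dt r1 r2 p1 p2
         \<le> Fh L N M0 N0 c12 c13 c23 e1 e2 e3 dt p1 p2 q1 q2"
proof -
  let ?c = "c12 - c13 - c23" and ?h = "hgrid L N"
  define f1 f2 where
    "f1 = (\<lambda>i j. dGc1 L N M0 N0 e1 e3 r1 r2 i j + dHa c12 c13 c23 (2 * p1 i j - q1 i j) (2 * p2 i j - q2 i j))"
    and "f2 = (\<lambda>i j. dGc2 L N M0 N0 e2 e3 r1 r2 i j + dHb c12 c13 c23 (2 * p1 i j - q1 i j) (2 * p2 i j - q2 i j))"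
  have per: "per N q1" "per N q2" "per N p1" "per N p2" "per N r1" "per N r2"
    using assms(13-15) by (simp_all add: gibbs_def)
  then have per_f: "per N f1" "per N f2"
    using per_dGc1[OF per(5,6)] per_dGc2[OF per(5,6)] unfolding per_def f1_def f2_def by simp_all
  have scheme:
    "\<And>i j. (3 * r1 i j - 4 * p1 i j + q1 i j) / (2 * dt) = lap ?h (\<lambda>i j. f1 i j
        - (2 * c13^2 + ?c^2 / 2) * dt * lap ?h (\<lambda>a b. r1 a b - p1 a b) i j) i j"
    "\<And>i j. (3 * r2 i j - 4 * p2 i j + q2 i j) / (2 * dt) = lap ?h (\<lambda>i j. f2 i j
        - (2 * c23^2 + ?c^2 / 2) * dt * lap ?h (\<lambda>a b. r2 a b - p2 a b) i j) i j"
    using assms(20) unfolding bdf2_step_def Let_def f1_def f2_def by simp_all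
  have "step_defect L N dt (2 * c13 + \<bar>?c\<bar> / 2) f1 r1 p1 q1 \<le> 0"
    using step_defect_nonpos[OF assms(1-3) _ stabilization_coeff_le per_f(1) per(5,3,1)
        assms(16,17) scheme(1)] assms(10) by simp
  moreover have "step_defect L N dt (2 * c23 + \<bar>?c\<bar> / 2) f2 r2 p2 q2 \<le> 0"
    using step_defect_nonpos[OF assms(1-3) _ stabilization_coeff_le per_f(2) per(6,4,2)
        assms(18,19) scheme(2)] assms(11) by simp
  moreover have "Fh L N M0 N0 c12 c13 c23 e1 e2 e3 dt r1 r2 p1 p2
      - Fh L N M0 N0 c12 c13 c23 e1 e2 e3 dt p1 p2 q1 q2
    \<le> step_defect L N dt (2 * c13 + \<bar>?c\<bar> / 2) f1 r1 p1 q1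
      + step_defect L N dt (2 * c23 + \<bar>?c\<bar> / 2) f2 r2 p2 q2"
    unfolding f1_def f2_def by (rule Fh_step_le[OF assms(4,5,10-12,14,15)])
  ultimately show ?thesis by linarith
qed

end
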